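(* Let $\Gamma$ be a finite simple graph with vertex set $\{1,\dots,V\}$. Let $\mathcal E$ be its set of directed edges, containing both orientations of each undirected edge, so that $|\mathcal E|$ is twice the number of undirected edges. Identify subsets $b\subseteq\mathcal E$ with bit-vectors in $\{0,1\}^{|\mathcal E|}$, and let $\mathrm{popcnt}(b)=|b|$. For $b\subseteq\mathcal E$, let $A(b)$ be the $V\times V$ matrix with $A(b)_{i,j}=1$ if $(j,i)\in b$ and $0$ otherwise. Fix $n=|\mathcal E|/2$ and set $\widetilde N_b=\mathrm{tr}\big(A(b)^n\big)$. Define $$N_b=\sum_{b'\subseteq b}(-1)^{|b|-|b'|}\,\widetilde N_{b'}.$$ Equivalently, ordering the bit-vectors in binary order, $N=Y_{|\mathcal E|}\widetilde N$, where $Y_1=\begin{pmatrix}1&0\\-1&1\end{pmatrix}$ and $Y_m=Y_1\otimes Y_{m-1}$ (Kronecker product) for $m>1$. Let $\mathcal B_{\rm Euler}$ be the set of subsets $b\subseteq\mathcal E$ that contain exactly one orientation of each undirected edge. Then the number $N_{\rm Euler}(\Gamma)$ of Eulerian cycles of $\Gamma$ satisfies $$N_{\rm Euler}(\Gamma)=\frac{2}{|\mathcal E|}\sum_{b\in\mathcal B_{\rm Euler}}N_b.$$ Here Eulerian cycles are counted up to cyclic shift, and a cycle and its reversal are counted as different.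
   Context: An Eulerian cycle is a closed walk traversing every undirected edge of $\Gamma$ exactly once. A periodic orbit of length $n$ is a closed walk of $n$ directed edges, considered up to cyclic shifts. Its support is the set of directed edges it uses. Its repetition number $r_p$ is the number of times it is a repetition of a shorter orbit. One has $\widetilde N_b=n\sum_{\mathrm{supp}(p)\subseteq b}1/r_p$ and $N_b=n\sum_{\mathrm{supp}(p)=b}1/r_p$, where the sums run over periodic orbits of length $n$. *)

theory Defs
  imports "Jordan_Normal_Form.Matrix"
begin

definition simple_graph :: "nat \<Rightarrow> (nat \<times> nat) set \<Rightarrow> bool" where
  "simple_graph V E \<longleftrightarrow> E \<subseteq> {1..V} \<times> {1..V} \<and> (\<forall>i j. (i, j) \<in> E \<longrightarrow> (j, i) \<in> E)
     \<and> (\<forall>i. (i, i) \<notin> E)"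

definition und_edges :: "(nat \<times> nat) set \<Rightarrow> nat set set" where
  "und_edges E = {{i, j} | i j. (i, j) \<in> E}"

definition mtrace :: "'a::comm_ring_1 mat \<Rightarrow> 'a" where
  "mtrace M = (\<Sum>i<dim_row M. M $$ (i, i))"

text \<open>A(b): V x V matrix with A(b)_{i,j} = 1 iff (j,i) \<in> b (vertices 1..V, matrix indices 0..V-1).\<close>
definition adjA :: "nat \<Rightarrow> (nat \<times> nat) set \<Rightarrow> int mat" where
  "adjA V b = mat V V (\<lambda>(i, j). if (j + 1, i + 1) \<in> b then 1 else 0)"

definition Ntilde :: "nat \<Rightarrow> (nat \<times> nat) set \<Rightarrow> (nat \<times> nat) set \<Rightarrow> int" where
  "Ntilde V E b = mtrace (adjA V b ^\<^sub>m (card E div 2))"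

definition Nb :: "nat \<Rightarrow> (nat \<times> nat) set \<Rightarrow> (nat \<times> nat) set \<Rightarrow> int" where
  "Nb V E b = (\<Sum>b'\<in>Pow b. (-1) ^ (card b - card b') * Ntilde V E b')"

definition B_Euler :: "(nat \<times> nat) set \<Rightarrow> (nat \<times> nat) set set" where
  "B_Euler E = {b. b \<subseteq> E \<and> (\<forall>i j. (i, j) \<in> E \<longrightarrow> ((i, j) \<in> b \<longleftrightarrow> (j, i) \<notin> b))}"

definition euler_list :: "(nat \<times> nat) set \<Rightarrow> (nat \<times> nat) list \<Rightarrow> bool" where
  "euler_list E es \<longleftrightarrow> es \<noteq> [] \<and> set es \<subseteq> E
     \<and> (\<forall>k < length es. snd (es ! k) = fst (es ! ((k + 1) mod length es)))
     \<and> distinct (map (\<lambda>(i, j). {i, j}) es)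
     \<and> set (map (\<lambda>(i, j). {i, j}) es) = und_edges E"

definition N_Euler :: "(nat \<times> nat) set \<Rightarrow> nat" where
  "N_Euler E = card {{rotate k es | k. True} | es. euler_list E es}"

end

theory Submission
  imports Defs
begin

(* tr A(b)^n counts the closed walks of length n along edges of b, recorded as edge lists with a
   marked starting edge. Moebius inversion over the subsets of b turns this into N_b, the number
   of such walks whose set of edges is exactly b. If b contains one orientation of every edge, a
   walk of length n = |E|/2 with edge set b uses each edge of b once, i.e. it is an Eulerian cycle
   with a marked starting edge; conversely every Eulerian cycle is such a walk for the orientation
   in which it traverses the edges. So the sum of N_b over B_Euler counts Eulerian cycles with a
   marked start, and every Eulerian cycle has exactly n distinct rotations. *)

fun walk :: "('v \<times> 'v) set \<Rightarrow> ('v \<times> 'v) list \<Rightarrow> 'v \<Rightarrow> 'v \<Rightarrow> bool" where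
  "walk b [] u v \<longleftrightarrow> u = v"
| "walk b (e # es) u v \<longleftrightarrow> e \<in> b \<and> fst e = u \<and> walk b es (snd e) v"

definition walks :: "('v \<times> 'v) set \<Rightarrow> nat \<Rightarrow> 'v \<Rightarrow> 'v \<Rightarrow> ('v \<times> 'v) list set" where
  "walks b k u v = {es. length es = k \<and> walk b es u v}"

lemma walk_iff:
  "walk b es u v \<longleftrightarrow> set es \<subseteq> b \<and>
     (if es = [] then u = v
      else fst (hd es) = u \<and> snd (last es) = v \<and> successively (\<lambda>e e'. snd e = fst e') es)"
  by (induction es arbitrary: u) (auto simp: successively_Cons)

lemma walk_subset: "walk b es u v \<Longrightarrow> set es \<subseteq> b"
  by (simp add: walk_iff)

lemma finite_walks: "finite b \<Longrightarrow> finite (walks b k u v)"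
  unfolding walks_def
  by (rule finite_subset[OF _ finite_lists_length_eq[of b k]]) (auto dest: walk_subset)

lemma walks_0: "walks b 0 u v = (if u = v then {[]} else {})"
  by (auto simp: walks_def)

lemma walks_Suc:
  "walks b (Suc k) u v = (\<Union>w\<in>{w. (u, w) \<in> b}. (#) (u, w) ` walks b k w v)"
  by (auto simp: walks_def length_Suc_conv)

definition closed_walk :: "('v \<times> 'v) list \<Rightarrow> bool" where
  "closed_walk es \<longleftrightarrow> (\<forall>k < length es. snd (es ! k) = fst (es ! ((k + 1) mod length es)))"

definition closed_walks :: "('v \<times> 'v) set \<Rightarrow> nat \<Rightarrow> ('v \<times> 'v) list set" where
  "closed_walks b m = {es. length es = m \<and> set es \<subseteq> b \<and> closed_walk es}"

lemma closed_walk_iff_successively: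
  assumes "es \<noteq> []"
  shows "closed_walk es \<longleftrightarrow>
    successively (\<lambda>e e'. snd e = fst e') es \<and> snd (last es) = fst (hd es)"
proof -
  let ?n = "length es"
  have split_last: "(\<forall>k<?n. Q k) \<longleftrightarrow> (\<forall>k. Suc k < ?n \<longrightarrow> Q k) \<and> Q (?n - 1)" for Q
  proof
    assume "\<forall>k<?n. Q k"
    then show "(\<forall>k. Suc k < ?n \<longrightarrow> Q k) \<and> Q (?n - 1)" using assms by simp
  next
    assume *: "(\<forall>k. Suc k < ?n \<longrightarrow> Q k) \<and> Q (?n - 1)"
    show "\<forall>k<?n. Q k"
    proof (intro allI impI)
      fix k assume "k < ?n"
      then consider "Suc k < ?n" | "k = ?n - 1" by linarith
      then show "Q k" using * by cases auto
    qed
  qed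
  show ?thesis
    unfolding closed_walk_def split_last successively_conv_nth
    using assms by (simp add: last_conv_nth hd_conv_nth)
qed

lemma walk_self_iff_closed_walk:
  "es \<noteq> [] \<Longrightarrow> walk b es u u \<longleftrightarrow> set es \<subseteq> b \<and> closed_walk es \<and> fst (hd es) = u"
  by (auto simp: walk_iff closed_walk_iff_successively)

lemma closed_walk_rotate: "closed_walk es \<Longrightarrow> closed_walk (rotate k es)"
  unfolding closed_walk_def
proof (intro allI impI)
  fix i assume cyclic: "\<forall>i<length es. snd (es ! i) = fst (es ! ((i + 1) mod length es))"
    and i: "i < length (rotate k es)"
  let ?n = "length es"
  have "i < ?n" using i by simp
  then have "0 < ?n" by linarith
  have "snd (rotate k es ! i) = snd (es ! ((k + i) mod ?n))" using i by (simp add: nth_rotate)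
  also have "\<dots> = fst (es ! (((k + i) mod ?n + 1) mod ?n))" using cyclic \<open>0 < ?n\<close> by simp
  also have "((k + i) mod ?n + 1) mod ?n = (k + (i + 1) mod ?n) mod ?n" by (simp add: mod_simps)
  also have "fst (es ! \<dots>) = fst (rotate k es ! ((i + 1) mod length (rotate k es)))"
    using \<open>0 < ?n\<close> by (simp add: nth_rotate)
  finally show "snd (rotate k es ! i) = fst (rotate k es ! ((i + 1) mod length (rotate k es)))" .
qed

lemma finite_closed_walks: "finite b \<Longrightarrow> finite (closed_walks b m)"
  unfolding closed_walks_def
  by (rule finite_subset[OF _ finite_lists_length_eq[of b m]]) auto

definition closed_walks_with_support :: "('v \<times> 'v) set \<Rightarrow> nat \<Rightarrow> ('v \<times> 'v) list set" where
  "closed_walks_with_support b m = {es \<in> closed_walks b m. set es = b}"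

lemma finite_closed_walks_with_support: "finite b \<Longrightarrow> finite (closed_walks_with_support b m)"
  by (simp add: closed_walks_with_support_def finite_closed_walks)

lemma card_closed_walks_eq_sum_support:
  assumes "finite b"
  shows "card (closed_walks b m) = (\<Sum>c\<in>Pow b. card (closed_walks_with_support c m))"
proof -
  have "closed_walks b m = (\<Union>c\<in>Pow b. closed_walks_with_support c m)"
    by (auto simp: closed_walks_def closed_walks_with_support_def)
  also have "card \<dots> = (\<Sum>c\<in>Pow b. card (closed_walks_with_support c m))"
  proof (rule card_UN_disjoint)
    show "\<forall>c\<in>Pow b. finite (closed_walks_with_support c m)"
      using assms by (auto intro: finite_closed_walks_with_support finite_subset)
  qed (auto simp: assms closed_walks_with_support_def)
  finally show ?thesis .
qed

lemma successors_eq_image_Suc: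
  assumes "b \<subseteq> {1..V} \<times> {1..V}"
  shows "{w. (u, w) \<in> b} = Suc ` {l \<in> {..<V}. (u, l + 1) \<in> b}"
proof (intro equalityI subsetI)
  fix w assume w: "w \<in> {w. (u, w) \<in> b}"
  then have "w \<in> {1..V}" using assms by auto
  with w show "w \<in> Suc ` {l \<in> {..<V}. (u, l + 1) \<in> b}"
    by (intro image_eqI[of _ _ "w - 1"]) auto
qed auto

lemma index_adjA_pow:
  assumes b: "b \<subseteq> {1..V} \<times> {1..V}" and "i < V" "j < V"
  shows "(adjA V b ^\<^sub>m k) $$ (i, j) = int (card (walks b k (j + 1) (i + 1)))"
  using assms(2,3)
proof (induction k arbitrary: j)
  case 0
  then show ?case by (simp add: adjA_def walks_0)
next
  case (Suc k)
  have fin: "finite b" using b by (rule finite_subset) auto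
  let ?succs = "{w. (j + 1, w) \<in> b}" and ?count = "\<lambda>w. card (walks b k w (i + 1))"
  note succs = successors_eq_image_Suc[OF b, of "j + 1"]
  then have fin_succs: "finite ?succs" by simp
  have adj_entry: "adjA V b $$ (l, j) = (if (j + 1, l + 1) \<in> b then 1 else 0)" if "l < V" for l
    using that Suc.prems by (simp add: adjA_def)
  have "adjA V b \<in> carrier_mat V V" by (simp add: adjA_def)
  then have "(adjA V b ^\<^sub>m Suc k) $$ (i, j) =
      (\<Sum>l<V. (adjA V b ^\<^sub>m k) $$ (i, l) * adjA V b $$ (l, j))"
    using Suc.prems by (simp add: scalar_prod_def atLeast0LessThan)
  also have "\<dots> = (\<Sum>l<V. if (j + 1, l + 1) \<in> b then int (?count (l + 1)) else 0)"
    using Suc adj_entry by (intro sum.cong) auto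
  also have "\<dots> = (\<Sum>l\<in>{l \<in> {..<V}. (j + 1, l + 1) \<in> b}. int (?count (l + 1)))"
    by (rule sum.inter_filter[symmetric]) simp
  also have "\<dots> = (\<Sum>w\<in>?succs. int (?count w))"
    unfolding succs by (simp add: sum.reindex)
  also have "\<dots> = int (\<Sum>w\<in>?succs. card ((#) (j + 1, w) ` walks b k w (i + 1)))"
    by (simp add: card_image)
  also have "\<dots> = int (card (\<Union>w\<in>?succs. (#) (j + 1, w) ` walks b k w (i + 1)))"
    using fin_succs by (subst card_UN_disjoint) (auto simp: finite_walks fin)
  also have "\<dots> = int (card (walks b (Suc k) (j + 1) (i + 1)))"
    by (simp only: walks_Suc)
  finally show ?case .
qed

lemma closed_walks_eq_UN_walks:
  fixes b :: "(nat \<times> nat) set"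
  assumes b: "b \<subseteq> {1..V} \<times> {1..V}" and "0 < m"
  shows "closed_walks b m = (\<Union>i<V. walks b m (i + 1) (i + 1))"
proof (intro equalityI subsetI)
  fix es assume es: "es \<in> closed_walks b m"
  then have "es \<noteq> []" "hd es \<in> b" using \<open>0 < m\<close> by (auto simp: closed_walks_def)
  moreover from this have "fst (hd es) \<in> {1..V}" using b by auto
  ultimately show "es \<in> (\<Union>i<V. walks b m (i + 1) (i + 1))"
    using es by (auto simp: walks_def closed_walks_def walk_self_iff_closed_walk
        intro!: bexI[of _ "fst (hd es) - 1"])
next
  fix es assume "es \<in> (\<Union>i<V. walks b m (i + 1) (i + 1))"
  then show "es \<in> closed_walks b m"
    using \<open>0 < m\<close> by (auto simp: walks_def closed_walks_def walk_self_iff_closed_walk)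
qed

lemma mtrace_adjA_pow:
  assumes b: "b \<subseteq> {1..V} \<times> {1..V}" and "0 < m"
  shows "mtrace (adjA V b ^\<^sub>m m) = int (card (closed_walks b m))"
proof -
  have fin: "finite b" using b by (rule finite_subset) auto
  have "adjA V b ^\<^sub>m m \<in> carrier_mat V V" by (simp add: adjA_def)
  then have "mtrace (adjA V b ^\<^sub>m m) = (\<Sum>i<V. int (card (walks b m (i + 1) (i + 1))))"
    unfolding mtrace_def by (intro sum.cong) (auto simp: index_adjA_pow[OF b])
  also have "\<dots> = int (card (\<Union>i<V. walks b m (i + 1) (i + 1)))"
  proof (subst card_UN_disjoint)
    show "\<forall>i\<in>{..<V}. \<forall>j\<in>{..<V}. i \<noteq> j \<longrightarrow>
        walks b m (i + 1) (i + 1) \<inter> walks b m (j + 1) (j + 1) = {}"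
      using \<open>0 < m\<close> by (auto simp: walks_def walk_iff)
  qed (simp_all add: fin finite_walks)
  finally show ?thesis
    by (simp only: closed_walks_eq_UN_walks[OF assms])
qed

lemma Nb_eq_card_closed_walks_with_support:
  assumes b: "b \<subseteq> {1..V} \<times> {1..V}" and "0 < card E div 2"
  shows "Nb V E b = int (card (closed_walks_with_support b (card E div 2)))"
proof -
  let ?m = "card E div 2"
  have fin: "finite b" using b by (rule finite_subset) auto
  have "int (card (closed_walks_with_support b ?m)) =
      (\<Sum>c\<in>Pow b. (-1) ^ (card b - card c) * int (card (closed_walks c ?m)))"
    using fin by (intro inclusion_exclusion_mobius) (simp_all add: card_closed_walks_eq_sum_support)
  also have "\<dots> = Nb V E b"
    unfolding Nb_def Ntilde_def using assms
    by (intro sum.cong refl) (auto simp: mtrace_adjA_pow)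
  finally show ?thesis by simp
qed

lemma simple_graphD:
  assumes "simple_graph V E"
  shows "E \<subseteq> {1..V} \<times> {1..V}" "finite E" "sym E" "irrefl E"
proof -
  show "E \<subseteq> {1..V} \<times> {1..V}" using assms by (simp add: simple_graph_def)
  then show "finite E" by (rule finite_subset) simp
  show "sym E" "irrefl E" using assms by (auto simp: simple_graph_def sym_def irrefl_def)
qed

lemma B_Euler_subset: "b \<in> B_Euler E \<Longrightarrow> b \<subseteq> E"
  by (simp add: B_Euler_def)

lemma B_Euler_orientation: "b \<in> B_Euler E \<Longrightarrow> (i, j) \<in> E \<Longrightarrow> (i, j) \<in> b \<longleftrightarrow> (j, i) \<notin> b"
  by (simp add: B_Euler_def)

lemma B_Euler_antiparallel: "b \<in> B_Euler E \<Longrightarrow> (i, j) \<in> b \<Longrightarrow> (j, i) \<notin> b"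
  using B_Euler_subset B_Euler_orientation by blast

lemma finite_B_Euler: "finite E \<Longrightarrow> finite (B_Euler E)"
  by (rule finite_subset[of _ "Pow E"]) (auto simp: B_Euler_def)

lemma finite_B_Euler_member: "finite E \<Longrightarrow> b \<in> B_Euler E \<Longrightarrow> finite b"
  by (rule finite_subset[OF B_Euler_subset])

lemma bij_betw_B_Euler_und_edges:
  assumes b: "b \<in> B_Euler E"
  shows "bij_betw (\<lambda>(i, j). {i, j}) b (und_edges E)"
  unfolding bij_betw_def
proof (intro conjI equalityI subsetI)
  show "inj_on (\<lambda>(i, j). {i, j}) b"
  proof (rule inj_onI, clarify)
    fix i j i' j' assume ij: "(i, j) \<in> b" "(i', j') \<in> b" "{i, j} = {i', j'}"
    show "i = i' \<and> j = j'" using B_Euler_antiparallel[OF b] ij by (auto simp: doubleton_eq_iff)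
  qed
next
  fix x assume "x \<in> (\<lambda>(i, j). {i, j}) ` b"
  then show "x \<in> und_edges E" using B_Euler_subset[OF b] by (auto simp: und_edges_def)
next
  fix x assume "x \<in> und_edges E"
  then obtain i j where x: "x = {i, j}" "(i, j) \<in> E" by (auto simp: und_edges_def)
  then have "(i, j) \<in> b \<or> (j, i) \<in> b" using B_Euler_orientation[OF b] by blast
  then show "x \<in> (\<lambda>(i, j). {i, j}) ` b"
    using x by (auto intro: image_eqI[of _ _ "(j, i)"] simp: insert_commute)
qed

lemma card_B_Euler:
  assumes "finite E" "sym E" and b: "b \<in> B_Euler E"
  shows "card E = 2 * card b"
proof -
  have "E = b \<union> b\<inverse>"
  proof (intro equalityI subsetI)
    fix e assume "e \<in> E"
    then obtain i j where "e = (i, j)" "(i, j) \<in> E" by (cases e) auto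
    then show "e \<in> b \<union> b\<inverse>" using B_Euler_orientation[OF b, of i j] by auto
  next
    fix e assume "e \<in> b \<union> b\<inverse>"
    then show "e \<in> E" using B_Euler_subset[OF b] \<open>sym E\<close> by (auto simp: sym_def)
  qed
  moreover have "b \<inter> b\<inverse> = {}" using B_Euler_antiparallel[OF b] by auto
  moreover have "finite b" using assms(1) B_Euler_subset[OF b] by (rule finite_subset[rotated])
  ultimately show ?thesis by (metis card_Un_disjoint card_inverse finite_converse mult_2)
qed

lemma upper_orientation_in_B_Euler:
  fixes E :: "(nat \<times> nat) set"
  assumes "sym E" "irrefl E"
  shows "{(i, j) \<in> E. i < j} \<in> B_Euler E"
  using assms unfolding B_Euler_def sym_def irrefl_def by auto (metis linorder_neqE_nat)

lemma even_card_sym_irrefl: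
  fixes E :: "(nat \<times> nat) set"
  assumes "finite E" "sym E" "irrefl E"
  shows "card E = 2 * (card E div 2)"
  using card_B_Euler[OF assms(1,2) upper_orientation_in_B_Euler[OF assms(2,3)]] by simp

lemma half_card_pos:
  fixes E :: "(nat \<times> nat) set"
  assumes "finite E" "sym E" "irrefl E" "E \<noteq> {}"
  shows "0 < card E div 2"
proof -
  have "0 < card E" using assms(1,4) by (simp add: card_gt_0_iff)
  then show ?thesis using even_card_sym_irrefl[OF assms(1-3)] by linarith
qed

lemma distinct_und_edges_iff:
  assumes "set es \<subseteq> E" "irrefl E"
  shows "distinct (map (\<lambda>(i, j). {i, j}) es) \<and> set (map (\<lambda>(i, j). {i, j}) es) = und_edges E
    \<longleftrightarrow> distinct es \<and> set es \<in> B_Euler E" (is "?lhs \<longleftrightarrow> ?rhs")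
proof
  assume ?rhs
  then show ?lhs
    using bij_betw_B_Euler_und_edges[of "set es" E] by (simp add: distinct_map bij_betw_def)
next
  assume lhs: ?lhs
  have "(i, j) \<in> set es \<longleftrightarrow> (j, i) \<notin> set es" if "(i, j) \<in> E" for i j
  proof
    assume ij: "(i, j) \<in> set es"
    have "i \<noteq> j" using that assms(2) by (auto simp: irrefl_def)
    with ij lhs show "(j, i) \<notin> set es"
      by (auto simp: distinct_map inj_on_def doubleton_eq_iff)
  next
    assume "(j, i) \<notin> set es"
    moreover have "{i, j} \<in> (\<lambda>(i, j). {i, j}) ` set es"
      using lhs that by (auto simp: und_edges_def)
    ultimately show "(i, j) \<in> set es" by (auto simp: doubleton_eq_iff)
  qed
  with lhs assms(1) show ?rhs by (auto simp: B_Euler_def distinct_map)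
qed

lemma euler_lists_eq_UN_closed_walks_with_support:
  fixes E :: "(nat \<times> nat) set"
  assumes "finite E" "sym E" "irrefl E" "E \<noteq> {}"
  shows "{es. euler_list E es} = (\<Union>b\<in>B_Euler E. closed_walks_with_support b (card E div 2))"
proof -
  let ?m = "card E div 2"
  have card_b: "card b = ?m" if "b \<in> B_Euler E" for b
    using card_B_Euler[OF assms(1,2) that] by simp
  have "euler_list E es \<longleftrightarrow> es \<noteq> [] \<and> closed_walk es \<and> distinct es \<and> set es \<in> B_Euler E" for es
  proof (cases "set es \<subseteq> E")
    case True
    then show ?thesis
      unfolding euler_list_def closed_walk_def distinct_und_edges_iff[OF True assms(3)] by auto
  next
    case False
    then show ?thesis by (auto simp: euler_list_def dest: B_Euler_subset)
  qed
  also have "\<dots> es \<longleftrightarrow> closed_walk es \<and> length es = ?m \<and> set es \<in> B_Euler E" for es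
    using card_b[of "set es"] half_card_pos[OF assms]
    by (auto simp: distinct_card intro: card_distinct)
  finally show ?thesis
    by (auto simp: closed_walks_with_support_def closed_walks_def dest: B_Euler_subset)
qed

lemma euler_list_rotate: "euler_list E es \<Longrightarrow> euler_list E (rotate k es)"
  using closed_walk_rotate[of es k]
  by (auto simp: euler_list_def closed_walk_def simp flip: rotate_map)

definition rotations :: "'a list \<Rightarrow> 'a list set" where
  "rotations xs = range (\<lambda>k. rotate k xs)"

lemma self_in_rotations: "xs \<in> rotations xs"
  unfolding rotations_def by (rule range_eqI[where x = 0]) simp

lemma mem_rotations_sym:
  assumes "ys \<in> rotations xs"
  shows "xs \<in> rotations ys"
proof (cases "xs = []")
  case True
  then show ?thesis using assms by (simp add: rotations_def)
next
  case False
  let ?n = "length xs"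
  obtain k where "ys = rotate k xs" using assms by (auto simp: rotations_def)
  then have ys: "ys = rotate (k mod ?n) xs" by (subst (asm) rotate_conv_mod)
  have "k mod ?n < ?n" using False by simp
  then have "rotate (?n - k mod ?n) ys = rotate ?n xs" by (simp add: ys rotate_rotate)
  also have "\<dots> = xs" by simp
  finally show ?thesis unfolding rotations_def by (metis rangeI)
qed

lemma rotations_eq:
  assumes "ys \<in> rotations xs"
  shows "rotations ys = rotations xs"
proof -
  have sub: "rotations v \<subseteq> rotations u" if "v \<in> rotations u" for u v :: "'a list"
  proof
    fix w assume "w \<in> rotations v"
    with that obtain j k where "v = rotate k u" "w = rotate j v" by (auto simp: rotations_def)
    then show "w \<in> rotations u" unfolding rotations_def by (metis rangeI rotate_rotate)
  qed
  show ?thesis using sub[OF assms] sub[OF mem_rotations_sym[OF assms]] by (rule equalityI)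
qed

lemma card_rotations:
  assumes "distinct xs" "xs \<noteq> []"
  shows "card (rotations xs) = length xs"
proof -
  have "rotations xs = (\<lambda>k. rotate k xs) ` {..<length xs}"
  proof (intro equalityI subsetI)
    fix ys assume "ys \<in> rotations xs"
    then obtain k where "ys = rotate k xs" by (auto simp: rotations_def)
    then have "ys = rotate (k mod length xs) xs" by (subst (asm) rotate_conv_mod)
    then show "ys \<in> (\<lambda>k. rotate k xs) ` {..<length xs}"
      using assms(2) by (intro image_eqI[of _ _ "k mod length xs"]) simp_all
  qed (auto simp: rotations_def)
  moreover have "inj_on (\<lambda>k. rotate k xs) {..<length xs}"
  proof (rule inj_onI)
    fix k l assume "k \<in> {..<length xs}" "l \<in> {..<length xs}" "rotate k xs = rotate l xs"
    then have "xs ! k = xs ! l" "k < length xs" "l < length xs"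
      using assms(2) by (auto dest: arg_cong[where f = hd] simp: hd_rotate_conv_nth)
    then show "k = l" using assms(1) by (simp add: nth_eq_iff_index_eq)
  qed
  ultimately show ?thesis by (simp add: card_image)
qed

lemma card_eq_length_mult_card_rotations:
  assumes "finite L" and rotate_closed: "\<And>xs k. xs \<in> L \<Longrightarrow> rotate k xs \<in> L"
    and "\<And>xs. xs \<in> L \<Longrightarrow> distinct xs \<and> length xs = n" and "0 < n"
  shows "card L = n * card (rotations ` L)"
proof -
  have "\<Union> (rotations ` L) \<subseteq> L" using rotate_closed by (auto simp: rotations_def)
  moreover have "L \<subseteq> \<Union> (rotations ` L)" using self_in_rotations by blast
  ultimately have L: "\<Union> (rotations ` L) = L" ..
  have "n * card (rotations ` L) = card (\<Union> (rotations ` L))"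
  proof (rule card_partition)
    show "card c = n" if "c \<in> rotations ` L" for c
      using that assms(3,4) card_rotations by fastforce
    show "c1 \<inter> c2 = {}" if "c1 \<in> rotations ` L" "c2 \<in> rotations ` L" "c1 \<noteq> c2" for c1 c2
      using that rotations_eq by blast
  qed (use assms(1) L in auto)
  then show ?thesis using L by simp
qed

lemma card_euler_lists:
  assumes "simple_graph V E" "E \<noteq> {}"
  shows "card {es. euler_list E es} = card E div 2 * N_Euler E"
proof -
  note E = simple_graphD[OF assms(1)]
  let ?L = "{es. euler_list E es}"
  note L = euler_lists_eq_UN_closed_walks_with_support[OF E(2-4) assms(2)]
  have "finite ?L" unfolding L
    using E(2) by (simp add: finite_B_Euler finite_closed_walks_with_support finite_B_Euler_member)
  moreover have "distinct es \<and> length es = card E div 2" if "es \<in> ?L" for es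
  proof
    show "distinct es" using that by (simp add: euler_list_def distinct_map)
    show "length es = card E div 2"
      using that unfolding L by (auto simp: closed_walks_with_support_def closed_walks_def)
  qed
  ultimately have "card ?L = card E div 2 * card (rotations ` ?L)"
    using euler_list_rotate half_card_pos[OF E(2-4) assms(2)]
    by (intro card_eq_length_mult_card_rotations) auto
  also have "rotations ` ?L = {{rotate k es | k. True} | es. euler_list E es}"
    by (simp add: rotations_def full_SetCompr_eq setcompr_eq_image)
  finally show ?thesis by (simp add: N_Euler_def)
qed

lemma sum_Nb_B_Euler:
  assumes "simple_graph V E" "E \<noteq> {}"
  shows "(\<Sum>b\<in>B_Euler E. Nb V E b) = int (card {es. euler_list E es})"
proof -
  note E = simple_graphD[OF assms(1)]
  let ?W = "\<lambda>b. closed_walks_with_support b (card E div 2)"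
  have Nb: "Nb V E b = int (card (?W b))" if "b \<in> B_Euler E" for b
    by (rule Nb_eq_card_closed_walks_with_support[OF subset_trans[OF B_Euler_subset[OF that] E(1)]
          half_card_pos[OF E(2-4) assms(2)]])
  have fin: "\<forall>b\<in>B_Euler E. finite (?W b)"
    using E(2) by (simp add: finite_closed_walks_with_support finite_B_Euler_member)
  have disj: "\<forall>b\<in>B_Euler E. \<forall>c\<in>B_Euler E. b \<noteq> c \<longrightarrow> ?W b \<inter> ?W c = {}"
    by (auto simp: closed_walks_with_support_def)
  have "(\<Sum>b\<in>B_Euler E. Nb V E b) = int (\<Sum>b\<in>B_Euler E. card (?W b))"
    by (simp add: Nb)
  also have "\<dots> = int (card (\<Union>b\<in>B_Euler E. ?W b))"
    by (simp only: card_UN_disjoint[OF finite_B_Euler[OF E(2)] fin disj])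
  also have "\<dots> = int (card {es. euler_list E es})"
    by (simp only: euler_lists_eq_UN_closed_walks_with_support[OF E(2-4) assms(2)])
  finally show ?thesis .
qed

theorem mainTheorem7:
  fixes V :: nat and E :: "(nat \<times> nat) set"
  assumes "simple_graph V E" and "E \<noteq> {}"
  shows "real (N_Euler E) = 2 / real (card E) * (\<Sum>b\<in>B_Euler E. real_of_int (Nb V E b))"
proof -
  note E = simple_graphD[OF assms(1)]
  let ?m = "card E div 2"
  have "(\<Sum>b\<in>B_Euler E. real_of_int (Nb V E b)) = real_of_int (\<Sum>b\<in>B_Euler E. Nb V E b)"
    by simp
  also have "\<dots> = real (?m * N_Euler E)"
    by (simp only: sum_Nb_B_Euler[OF assms] card_euler_lists[OF assms] of_int_of_nat_eq)
  finally have "(\<Sum>b\<in>B_Euler E. real_of_int (Nb V E b)) = real ?m * real (N_Euler E)"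
    by simp
  moreover have "card E = 2 * ?m" by (rule even_card_sym_irrefl[OF E(2-4)])
  moreover have "0 < ?m" by (rule half_card_pos[OF E(2-4) assms(2)])
  ultimately show ?thesis by (simp add: field_simps)
qed

end
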